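(* Let $m\ge1$. For $j=1,\ldots,m$ let $\rho_j,\bar\gamma_j\ge0$ with $\rho_j+\bar\gamma_j>0$, and let $\phi_{j,0}>0$ be constants. Let $(\eta_i)_{i\ge0}$ be integrable random variables with $\eta_{i+1}\ge\eta_i$ almost surely for all $i$, and $\eta_0\ge\underline\eta$ almost surely for some constant $\underline\eta>0$. Define recursively $$\phi_{j,i+1}:=\phi_{j,i}+2(\bar\gamma_j\eta_i+\rho_j)\qquad(j=1,\ldots,m;\ i\ge0).$$ Then: (a) If each $\eta_i$ is $\mathcal{O}_{i-1}$-measurable for a filtration $(\mathcal{O}_i)_{i\ge-1}$, then $\phi_{j,N}$ is $\mathcal{O}_{N-1}$-measurable and positive for every $N\ge1$. (b) For every $N\ge1$, $$\mathcal{E}[\phi_{j,N}]=\phi_{j,0}+2\rho_jN+2\bar\gamma_j\sum_{i=0}^{N-1}\mathcal{E}[\eta_i].$$ (c) There are constants $c_j>0$ such that $\mathcal{E}[\phi_{j,N}^{-1}]\le c_j/N$ for all $N\ge1$. (d) Suppose in addition that there are $p>0$ and $b>0$ such that $\eta_i\ge b\min_{k=1,\ldots,m}\phi_{k,i}^{\,p}$ almost surely for all $i\ge0$. Then there are constants $\tilde c_j>0$ such that $$\frac{1}{\mathcal{E}[\phi_{j,N}^{-1}]}\ \ge\ \bar\gamma_j\tilde c_jN^{p+1}\qquad(N\ge4).$$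
   Context: $\mathcal{E}$ denotes expectation on an underlying probability space. A filtration $(\mathcal{O}_i)_{i\ge-1}$ is an increasing sequence of $\sigma$-algebras. *)

theory Defs
  imports "HOL-Probability.Probability"
begin

primrec phiseq :: "(nat \<Rightarrow> real) \<Rightarrow> (nat \<Rightarrow> real) \<Rightarrow> (nat \<Rightarrow> real)
    \<Rightarrow> (nat \<Rightarrow> 'a \<Rightarrow> real) \<Rightarrow> nat \<Rightarrow> nat \<Rightarrow> 'a \<Rightarrow> real" where
  "phiseq phi0 \<rho> \<gamma> \<eta> j 0 = (\<lambda>x. phi0 j)"
| "phiseq phi0 \<rho> \<gamma> \<eta> j (Suc i) =
     (\<lambda>x. phiseq phi0 \<rho> \<gamma> \<eta> j i x + 2 * (\<gamma> j * \<eta> i x + \<rho> j))"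

end

theory Submission
  imports Defs "HOL-Probability.Conditional_Expectation"
begin

text \<open>Unrolling the recursion, \<open>\<phi>\<^sub>j\<^sub>,\<^sub>N = \<phi>\<^sub>j\<^sub>,\<^sub>0 + 2\<rho>\<^sub>jN + 2\<gamma>\<^sub>j \<Sum>\<^sub>i\<^sub><\<^sub>N \<eta>\<^sub>i\<close> is an affine
  function of \<open>\<eta>\<^sub>0, \<dots>, \<eta>\<^sub>N\<^sub>-\<^sub>1\<close>, which gives measurability and the expectation formula.
  Since \<open>\<eta>\<^sub>i \<ge> \<eta>\<^sub>0 \<ge> \<eta>low\<close> almost surely, \<open>\<phi>\<^sub>j\<^sub>,\<^sub>N\<close> grows at least linearly in \<open>N\<close>, so
  \<open>\<phi>\<^sub>j\<^sub>,\<^sub>N\<^sup>-\<^sup>1 = O(1/N)\<close> pathwise. Under the extra hypothesis of (d), the linear growth of all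
  \<open>\<phi>\<^sub>k\<^sub>,\<^sub>i\<close> forces \<open>\<eta>\<^sub>i \<ge> const \<cdot> (i+1)\<^sup>p\<close>, and summing gives \<open>\<phi>\<^sub>j\<^sub>,\<^sub>N \<ge> \<gamma>\<^sub>j \<cdot> const \<cdot> N\<^sup>p\<^sup>+\<^sup>1\<close>
  pathwise. Pathwise lower bounds \<open>\<phi> \<ge> c > 0\<close> turn into \<open>\<E>[\<phi>\<^sup>-\<^sup>1] \<le> 1/c\<close>.\<close>

lemma phiseq_eq_sum:
  "phiseq phi0 \<rho> \<gamma> \<eta> j N = (\<lambda>x. phi0 j + 2 * \<rho> j * real N + 2 * \<gamma> j * (\<Sum>i<N. \<eta> i x))"
  by (induction N) (simp_all add: algebra_simps)

lemma phiseq_measurable: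
  assumes "\<And>i. i < N \<Longrightarrow> \<eta> i \<in> borel_measurable M"
  shows "phiseq phi0 \<rho> \<gamma> \<eta> j N \<in> borel_measurable M"
  using assms unfolding phiseq_eq_sum by auto

lemma phiseq_adapted:
  assumes F: "filtration \<Omega> F" and \<eta>: "\<And>i. \<eta> i \<in> borel_measurable (F i)"
  shows "phiseq phi0 \<rho> \<gamma> \<eta> j N \<in> borel_measurable (F N)"
proof (rule phiseq_measurable)
  fix i assume "i < N"
  then have "subalgebra (F N) (F i)"
    using filtration.space_F[OF F] filtration.sets_F_mono[OF F, of i N]
    by (auto simp: subalgebra_def)
  then show "\<eta> i \<in> borel_measurable (F N)"
    using \<eta> by (rule measurable_from_subalg)
qed

lemma (in prob_space) expectation_phiseq:
  assumes "\<And>i. integrable M (\<eta> i)"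
  shows "expectation (phiseq phi0 \<rho> \<gamma> \<eta> j N)
           = phi0 j + 2 * \<rho> j * real N + 2 * \<gamma> j * (\<Sum>i<N. expectation (\<eta> i))"
  using assms unfolding phiseq_eq_sum by (simp add: prob_space)

lemma phiseq_ge_linear:
  assumes "\<gamma> j \<ge> 0" and "\<And>i. i < N \<Longrightarrow> l \<le> \<eta> i x"
  shows "phi0 j + 2 * real N * (\<gamma> j * l + \<rho> j) \<le> phiseq phi0 \<rho> \<gamma> \<eta> j N x"
proof -
  have "real N * l \<le> (\<Sum>i<N. \<eta> i x)"
    using sum_bounded_below[of "{..<N}" l "\<lambda>i. \<eta> i x"] assms(2) by auto
  then have "\<gamma> j * (real N * l) \<le> \<gamma> j * (\<Sum>i<N. \<eta> i x)"
    using assms(1) by (rule mult_left_mono)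
  then show ?thesis unfolding phiseq_eq_sum by (simp add: algebra_simps)
qed

text \<open>The upper half of the sum already gives the bound: it has at least \<open>N/2\<close> terms,
  each at least \<open>(N/2)\<^sup>p\<close>.\<close>
lemma sum_powr_ge:
  fixes p :: real
  assumes "p > 0"
  shows "(real N / 2) powr (p + 1) \<le> (\<Sum>i<N. (real i + 1) powr p)"
proof -
  let ?H = "{N div 2..<N}"
  have "(real N / 2) powr (p + 1) = (real N / 2) * (real N / 2) powr p"
    by (simp add: powr_add)
  also have "\<dots> \<le> real (card ?H) * (real N / 2) powr p"
    by (intro mult_right_mono) auto
  also have "\<dots> \<le> (\<Sum>i\<in>?H. (real i + 1) powr p)"
  proof (rule sum_bounded_below)
    fix i assume "i \<in> ?H"
    then show "(real N / 2) powr p \<le> (real i + 1) powr p"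
      using assms by (intro powr_mono2) auto
  qed
  also have "\<dots> \<le> (\<Sum>i<N. (real i + 1) powr p)"
    by (intro sum_mono2) auto
  finally show ?thesis .
qed

lemma phiseq_ge_powr:
  assumes "\<gamma> j \<ge> 0" "\<rho> j \<ge> 0" "phi0 j \<ge> 0" "p > 0" "B \<ge> 0"
    and \<eta>: "\<And>i. i < N \<Longrightarrow> B * (real i + 1) powr p \<le> \<eta> i x"
  shows "2 * \<gamma> j * B * (real N / 2) powr (p + 1) \<le> phiseq phi0 \<rho> \<gamma> \<eta> j N x"
proof -
  have "B * (real N / 2) powr (p + 1) \<le> B * (\<Sum>i<N. (real i + 1) powr p)"
    using sum_powr_ge[OF \<open>p > 0\<close>] \<open>B \<ge> 0\<close> by (rule mult_left_mono)
  also have "\<dots> \<le> (\<Sum>i<N. \<eta> i x)"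
    unfolding sum_distrib_left using \<eta> by (intro sum_mono) auto
  finally have "2 * \<gamma> j * (B * (real N / 2) powr (p + 1)) \<le> 2 * \<gamma> j * (\<Sum>i<N. \<eta> i x)"
    using \<open>\<gamma> j \<ge> 0\<close> by (intro mult_left_mono) auto
  moreover have "0 \<le> phi0 j + 2 * \<rho> j * real N"
    using assms(2,3) by simp
  ultimately show ?thesis
    unfolding phiseq_eq_sum by (simp add: mult.assoc)
qed

context prob_space
begin

context
  fixes f :: "'a \<Rightarrow> real" and c :: real
  assumes f: "f \<in> borel_measurable M" and c: "c > 0" and ge: "AE x in M. c \<le> f x"
begin

lemma integrable_inverse_of_ge: "integrable M (\<lambda>x. inverse (f x))"
proof (rule integrable_const_bound[where B = "inverse c"])
  show "AE x in M. norm (inverse (f x)) \<le> inverse c"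
    using ge by eventually_elim (use c in \<open>simp add: le_imp_inverse_le\<close>)
qed (use f in measurable)

lemma expectation_inverse_le: "expectation (\<lambda>x. inverse (f x)) \<le> inverse c"
proof -
  have "expectation (\<lambda>x. inverse (f x)) \<le> expectation (\<lambda>x. inverse c)"
  proof (rule integral_mono_AE[OF integrable_inverse_of_ge])
    show "AE x in M. inverse (f x) \<le> inverse c"
      using ge by eventually_elim (use c in \<open>simp add: le_imp_inverse_le\<close>)
  qed simp
  then show ?thesis by (simp add: prob_space)
qed

lemma expectation_inverse_pos: "0 < expectation (\<lambda>x. inverse (f x))"
proof -
  have "expectation (\<lambda>x. 0) < expectation (\<lambda>x. inverse (f x))"
  proof (rule integral_less_AE_space[OF _ integrable_inverse_of_ge])
    show "AE x in M. 0 < inverse (f x)"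
      using ge by eventually_elim (use c in simp)
  qed (simp_all add: emeasure_space_1)
  then show ?thesis by simp
qed

lemma le_inverse_expectation_inverse: "c \<le> 1 / expectation (\<lambda>x. inverse (f x))"
  using expectation_inverse_le expectation_inverse_pos c
  by (simp add: field_simps)

end

end

locale phiseq_setting = prob_space M
  for M :: "'a measure" and J :: "nat set" and \<rho> \<gamma> phi0 :: "nat \<Rightarrow> real"
    and \<eta> :: "nat \<Rightarrow> 'a \<Rightarrow> real" and \<eta>low :: real +
  assumes rho_nn: "\<And>j. j \<in> J \<Longrightarrow> \<rho> j \<ge> 0"
    and gamma_nn: "\<And>j. j \<in> J \<Longrightarrow> \<gamma> j \<ge> 0"
    and rho_gamma_pos: "\<And>j. j \<in> J \<Longrightarrow> \<rho> j + \<gamma> j > 0"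
    and phi0_pos: "\<And>j. j \<in> J \<Longrightarrow> phi0 j > 0"
    and eta_int: "\<And>i. integrable M (\<eta> i)"
    and eta_mono: "\<And>i. AE x in M. \<eta> (Suc i) x \<ge> \<eta> i x"
    and eta_low_pos: "\<eta>low > 0"
    and eta0_low: "AE x in M. \<eta> 0 x \<ge> \<eta>low"
begin

abbreviation "\<phi> \<equiv> phiseq phi0 \<rho> \<gamma> \<eta>"

definition rate :: "nat \<Rightarrow> real" where
  "rate j = \<gamma> j * \<eta>low + \<rho> j"

lemma rate_pos: "j \<in> J \<Longrightarrow> rate j > 0"
  using rho_nn[of j] gamma_nn[of j] rho_gamma_pos[of j] eta_low_pos unfolding rate_def
  by (cases "\<gamma> j = 0") (auto intro: add_pos_nonneg)

lemma phi_measurable: "\<phi> j N \<in> borel_measurable M"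
  using eta_int by (intro phiseq_measurable) auto

lemma AE_eta_ge_low: "AE x in M. \<forall>i. \<eta>low \<le> \<eta> i x"
proof -
  have "AE x in M. (\<forall>i. \<eta> i x \<le> \<eta> (Suc i) x) \<and> \<eta>low \<le> \<eta> 0 x"
    using eta_mono eta0_low by (auto simp: AE_all_countable)
  then show ?thesis
    by eventually_elim (meson incseq_SucI incseqD order_trans zero_le)
qed

lemma AE_phi_ge_linear: "AE x in M. \<forall>j\<in>J. \<forall>N. phi0 j + 2 * real N * rate j \<le> \<phi> j N x"
  using AE_eta_ge_low by eventually_elim (auto simp: rate_def intro!: phiseq_ge_linear gamma_nn)

lemma AE_phi_ge_phi0:
  assumes "j \<in> J"
  shows "AE x in M. phi0 j \<le> \<phi> j N x"
  using AE_phi_ge_linear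
proof eventually_elim
  case (elim x)
  have "phi0 j + 2 * real N * rate j \<le> \<phi> j N x" using elim assms by blast
  moreover have "0 \<le> 2 * real N * rate j" using rate_pos[OF assms] by simp
  ultimately show ?case by linarith
qed

lemma AE_phi_pos: "j \<in> J \<Longrightarrow> AE x in M. 0 < \<phi> j N x"
  using AE_phi_ge_phi0[of j N] phi0_pos[of j] by (auto elim!: AE_mp)

lemma expectation_inverse_phi_le:
  assumes "j \<in> J" and "N \<ge> 1"
  shows "expectation (\<lambda>x. inverse (\<phi> j N x)) \<le> inverse (2 * rate j) / real N"
proof -
  have "AE x in M. 2 * real N * rate j \<le> \<phi> j N x"
    using AE_phi_ge_linear
  proof eventually_elim
    case (elim x)
    then have "phi0 j + 2 * real N * rate j \<le> \<phi> j N x" using \<open>j \<in> J\<close> by blast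
    then show ?case using phi0_pos[OF \<open>j \<in> J\<close>] by linarith
  qed
  then have "expectation (\<lambda>x. inverse (\<phi> j N x)) \<le> inverse (2 * real N * rate j)"
    using rate_pos[OF \<open>j \<in> J\<close>] \<open>N \<ge> 1\<close> by (intro expectation_inverse_le phi_measurable) auto
  then show ?thesis by (simp add: field_simps)
qed

definition slope :: real where
  "slope = Min ((\<lambda>k. min (phi0 k) (2 * rate k)) ` J)"

context
  assumes J: "finite J" "J \<noteq> {}"
begin

lemma slope_pos: "slope > 0"
  unfolding slope_def using J phi0_pos rate_pos by (subst Min_gr_iff) auto

lemma AE_phi_ge_slope: "AE x in M. \<forall>k\<in>J. \<forall>i. slope * (real i + 1) \<le> \<phi> k i x"
  using AE_phi_ge_linear
proof eventually_elim
  case (elim x)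
  show ?case
  proof (intro ballI allI)
    fix k i assume k: "k \<in> J"
    have "slope \<le> min (phi0 k) (2 * rate k)"
      unfolding slope_def using J k by (intro Min_le) auto
    then have "slope * (real i + 1) \<le> phi0 k + 2 * real i * rate k"
      by (simp add: algebra_simps add_mono mult_left_mono)
    also have "\<dots> \<le> \<phi> k i x" using elim k by blast
    finally show "slope * (real i + 1) \<le> \<phi> k i x" .
  qed
qed

lemma AE_phi_ge_powr:
  assumes "p > 0" "b > 0" "j \<in> J"
    and \<eta>: "\<And>i. AE x in M. b * Min ((\<lambda>k. \<phi> k i x powr p) ` J) \<le> \<eta> i x"
  shows "AE x in M. \<gamma> j * (b * (slope / 2) powr p) * real N powr (p + 1) \<le> \<phi> j N x"
proof -
  have "AE x in M. \<forall>i. b * Min ((\<lambda>k. \<phi> k i x powr p) ` J) \<le> \<eta> i x"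
    using \<eta> by (simp add: AE_all_countable)
  with AE_phi_ge_slope show ?thesis
  proof eventually_elim
    case (elim x)
    have "b * slope powr p * (real i + 1) powr p \<le> \<eta> i x" for i
    proof -
      have "(slope * (real i + 1)) powr p \<le> Min ((\<lambda>k. \<phi> k i x powr p) ` J)"
        using J elim slope_pos \<open>p > 0\<close> by (subst Min_ge_iff) (auto intro!: powr_mono2)
      then have "b * (slope * (real i + 1)) powr p \<le> \<eta> i x"
        using elim \<open>b > 0\<close> by (meson mult_left_mono less_imp_le order_trans)
      then show ?thesis using slope_pos by (simp add: powr_mult mult.assoc)
    qed
    then have "2 * \<gamma> j * (b * slope powr p) * (real N / 2) powr (p + 1) \<le> \<phi> j N x"
      using assms slope_pos gamma_nn rho_nn phi0_pos
      by (intro phiseq_ge_powr) (auto simp: less_imp_le)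
    moreover have "(real N / 2) powr (p + 1) = real N powr (p + 1) / (2 * 2 powr p)"
      by (simp add: powr_divide powr_add)
    moreover have "(slope / 2) powr p = slope powr p / 2 powr p"
      using slope_pos by (simp add: powr_divide)
    ultimately show ?case by simp
  qed
qed

lemma inverse_expectation_inverse_phi_ge:
  assumes p: "p > 0" and b: "b > 0" and j: "j \<in> J"
    and \<eta>: "\<And>i. AE x in M. b * Min ((\<lambda>k. \<phi> k i x powr p) ` J) \<le> \<eta> i x"
  shows "\<gamma> j * (b * (slope / 2) powr p) * real N powr (p + 1)
           \<le> 1 / expectation (\<lambda>x. inverse (\<phi> j N x))"
proof -
  let ?K = "\<gamma> j * (b * (slope / 2) powr p) * real N powr (p + 1)"
  have "AE x in M. max (phi0 j) ?K \<le> \<phi> j N x"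
    using AE_phi_ge_powr[OF p b j \<eta>] AE_phi_ge_phi0[OF j] by eventually_elim simp
  then have "max (phi0 j) ?K \<le> 1 / expectation (\<lambda>x. inverse (\<phi> j N x))"
    using phi0_pos[OF j] by (intro le_inverse_expectation_inverse phi_measurable) auto
  then show ?thesis by linarith
qed

end

end

theorem mainTheorem4:
  fixes M :: "'a measure" and m :: nat
    and \<rho> \<gamma> phi0 :: "nat \<Rightarrow> real"
    and \<eta> :: "nat \<Rightarrow> 'a \<Rightarrow> real" and \<eta>low :: real
  defines "\<phi> \<equiv> phiseq phi0 \<rho> \<gamma> \<eta>"
  assumes M: "prob_space M"
    and m: "m \<ge> 1"
    and rho_nn: "\<And>j. j \<in> {1..m} \<Longrightarrow> \<rho> j \<ge> 0"
    and gamma_nn: "\<And>j. j \<in> {1..m} \<Longrightarrow> \<gamma> j \<ge> 0"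
    and rho_gamma_pos: "\<And>j. j \<in> {1..m} \<Longrightarrow> \<rho> j + \<gamma> j > 0"
    and phi0_pos: "\<And>j. j \<in> {1..m} \<Longrightarrow> phi0 j > 0"
    and eta_int: "\<And>i. integrable M (\<eta> i)"
    and eta_mono: "\<And>i. AE x in M. \<eta> (Suc i) x \<ge> \<eta> i x"
    and eta_low_pos: "\<eta>low > 0"
    and eta0_low: "AE x in M. \<eta> 0 x \<ge> \<eta>low"
  shows
    \<comment> \<open>(a): the filtration (O_i)_{i>=-1} is represented by F with F i = O_{i-1}\<close>
    "(\<forall>F :: nat \<Rightarrow> 'a measure.
        filtration (space M) F \<longrightarrow> (\<forall>i. subalgebra M (F i)) \<longrightarrow>
        (\<forall>i. \<eta> i \<in> borel_measurable (F i)) \<longrightarrow>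
        (\<forall>j\<in>{1..m}. \<forall>N\<ge>1. \<phi> j N \<in> borel_measurable (F N)
                              \<and> (AE x in M. \<phi> j N x > 0)))
     \<and> \<comment> \<open>(b)\<close>
     (\<forall>j\<in>{1..m}. \<forall>N\<ge>1.
        prob_space.expectation M (\<phi> j N) =
          phi0 j + 2 * \<rho> j * real N + 2 * \<gamma> j * (\<Sum>i<N. prob_space.expectation M (\<eta> i)))
     \<and> \<comment> \<open>(c)\<close>
     (\<forall>j\<in>{1..m}. \<exists>c>0. \<forall>N\<ge>1.
        prob_space.expectation M (\<lambda>x. inverse (\<phi> j N x)) \<le> c / real N)
     \<and> \<comment> \<open>(d)\<close>
     (\<forall>p b. p > 0 \<longrightarrow> b > 0 \<longrightarrow>
        (\<forall>i. AE x in M. \<eta> i x \<ge> b * Min ((\<lambda>k. \<phi> k i x powr p) ` {1..m})) \<longrightarrow>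
        (\<forall>j\<in>{1..m}. \<exists>ct>0. \<forall>N\<ge>4.
           1 / prob_space.expectation M (\<lambda>x. inverse (\<phi> j N x))
             \<ge> \<gamma> j * ct * real N powr (p + 1)))"
proof -
  interpret phiseq_setting M "{1..m}" \<rho> \<gamma> phi0 \<eta> \<eta>low
    by (intro phiseq_setting.intro phiseq_setting_axioms.intro M rho_nn gamma_nn rho_gamma_pos
        phi0_pos eta_int eta_mono eta_low_pos eta0_low)
  have J: "finite {1..m}" "{1..m} \<noteq> {}" using m by auto
  show ?thesis
    unfolding \<phi>_def
  proof (intro conjI allI impI ballI)
    show "phiseq phi0 \<rho> \<gamma> \<eta> j N \<in> borel_measurable (F N)"
      if "filtration (space M) F" "\<forall>i. \<eta> i \<in> borel_measurable (F i)" for F j N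
      using that by (intro phiseq_adapted) auto
    show "\<exists>c>0. \<forall>N\<ge>1. expectation (\<lambda>x. inverse (phiseq phi0 \<rho> \<gamma> \<eta> j N x)) \<le> c / real N"
      if j: "j \<in> {1..m}" for j
      using expectation_inverse_phi_le[OF j] rate_pos[OF j]
      by (intro exI[of _ "inverse (2 * rate j)"]) auto
    show "\<exists>ct>0. \<forall>N\<ge>4. \<gamma> j * ct * real N powr (p + 1)
                        \<le> 1 / expectation (\<lambda>x. inverse (phiseq phi0 \<rho> \<gamma> \<eta> j N x))"
      if "p > 0" "b > 0"
        "\<forall>i. AE x in M. b * Min ((\<lambda>k. phiseq phi0 \<rho> \<gamma> \<eta> k i x powr p) ` {1..m}) \<le> \<eta> i x"
        "j \<in> {1..m}" for p b j
      using that slope_pos[OF J] inverse_expectation_inverse_phi_ge[OF J]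
      by (intro exI[of _ "b * (slope / 2) powr p"]) auto
  qed (simp_all add: AE_phi_pos expectation_phiseq eta_int)
qed

end
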